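(* Let $G=(V,E)$ be a finite simple strongly connected directed graph with a fixed total order on $V$, and let $\mathbf b$ be a spanning tree of $G$. Let $Z=\phi(\mathbf b)$. Then the set of vertices erased when running the exploration algorithm on $\mathbf b$ coincides with the set of boundary points of $\mathbf b$, i.e. the set of vertices $u\in V\setminus Z$ having an outgoing edge with target in $Z$.
   Context: A spanning tree of $G$ is a subgraph on all vertices with no cycle, one vertex (root) of outdegree $0$ and all others of outdegree $1$. Exploration algorithm (depends on the fixed total order of $V$). Input: a spanning tree $\mathbf a$ rooted at $v$. Initialize $A=\{v\}$, $F=\{e: s(e)\neq v\}$, $\mathbf L$ = FIFO list of edges with target $v$, by increasing source. While $\mathbf L$ is nonempty, take its first edge $e$, with source $w$: if $e\in\mathbf a$, add $w$ to $A$, delete from $\mathbf L$ (and $F$) all edges with source $w$, and append to $\mathbf L$ all edges of $F$ with target $w$ by increasing source; otherwise delete from $\mathbf L$ and $F$ all edges with source or target $w$, and $w$ is said to be erased. At the end $\phi(\mathbf a)=A$. *)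

theory Defs
  imports Main
begin

text \<open>A directed graph is given by a finite vertex set V and an edge set E of pairs
  (source, target). The fixed total order on V is the linorder of the vertex type.\<close>

definition simple_digraph :: "'a set \<Rightarrow> ('a \<times> 'a) set \<Rightarrow> bool" where
  "simple_digraph V E \<longleftrightarrow> finite V \<and> E \<subseteq> V \<times> V \<and> (\<forall>x. (x, x) \<notin> E)"

definition strongly_connected :: "'a set \<Rightarrow> ('a \<times> 'a) set \<Rightarrow> bool" where
  "strongly_connected V E \<longleftrightarrow> (\<forall>u\<in>V. \<forall>w\<in>V. (u, w) \<in> E\<^sup>*)"

definition outdeg :: "('a \<times> 'a) set \<Rightarrow> 'a \<Rightarrow> nat" where
  "outdeg a u = card {e \<in> a. fst e = u}"

definition spanning_tree :: "'a set \<Rightarrow> ('a \<times> 'a) set \<Rightarrow> ('a \<times> 'a) set \<Rightarrow> 'a \<Rightarrow> bool" where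
  "spanning_tree V E a r \<longleftrightarrow> a \<subseteq> E \<and> r \<in> V \<and> acyclic a \<and> outdeg a r = 0
     \<and> (\<forall>u\<in>V. u \<noteq> r \<longrightarrow> outdeg a u = 1)"

type_synonym 'a expl_state = "'a set \<times> ('a \<times> 'a) set \<times> ('a \<times> 'a) list \<times> 'a set"

definition in_edges_sorted :: "('a::linorder \<times> 'a) set \<Rightarrow> 'a \<Rightarrow> ('a \<times> 'a) list" where
  "in_edges_sorted F w = map (\<lambda>u. (u, w)) (sorted_list_of_set {u. (u, w) \<in> F})"

definition expl_init :: "('a::linorder \<times> 'a) set \<Rightarrow> 'a \<Rightarrow> 'a expl_state" where
  "expl_init E r = ({r}, {e \<in> E. fst e \<noteq> r}, in_edges_sorted E r, {})"

definition expl_step :: "('a::linorder \<times> 'a) set \<Rightarrow> 'a expl_state \<Rightarrow> 'a expl_state" where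
  "expl_step a s = (case s of (A, F, L, Er) \<Rightarrow>
     (case L of
        [] \<Rightarrow> (A, F, L, Er)
      | e # L' \<Rightarrow>
          (let w = fst e in
           if e \<in> a then
             (let F' = {f \<in> F. fst f \<noteq> w} in
              (insert w A, F', filter (\<lambda>f. fst f \<noteq> w) L' @ in_edges_sorted F' w, Er))
           else
             (let F' = {f \<in> F. fst f \<noteq> w \<and> snd f \<noteq> w} in
              (A, F', filter (\<lambda>f. fst f \<noteq> w \<and> snd f \<noteq> w) L', insert w Er)))))"

text \<open>Each step with nonempty L removes at least one edge from F (the processed edge lies
  in F), so after card E steps the list L is empty and the algorithm has stopped; further
  steps are the identity.\<close>
definition expl_final :: "('a::linorder \<times> 'a) set \<Rightarrow> ('a \<times> 'a) set \<Rightarrow> 'a \<Rightarrow> 'a expl_state" where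
  "expl_final E a r = (expl_step a ^^ card E) (expl_init E r)"

definition phi :: "('a::linorder \<times> 'a) set \<Rightarrow> ('a \<times> 'a) set \<Rightarrow> 'a \<Rightarrow> 'a set" where
  "phi E a r = fst (expl_final E a r)"

definition erased :: "('a::linorder \<times> 'a) set \<Rightarrow> ('a \<times> 'a) set \<Rightarrow> 'a \<Rightarrow> 'a set" where
  "erased E a r = snd (snd (snd (expl_final E a r)))"

definition boundary :: "'a set \<Rightarrow> ('a \<times> 'a) set \<Rightarrow> 'a set \<Rightarrow> 'a set" where
  "boundary V E Z = {u \<in> V - Z. \<exists>z\<in>Z. (u, z) \<in> E}"

end

theory Submission
  imports Defs
begin

text \<open>Run the algorithm on any finite graph with any edge set \<open>a\<close> and keep track
  of the invariant: \<open>F\<close> consists exactly of the edges whose source is neither accepted nor erased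
  and whose target is not erased; every edge of \<open>L\<close> lies in \<open>F\<close> and points into \<open>A\<close>; every
  erased vertex was erased because of an edge into \<open>A\<close>; and every edge into \<open>A\<close> has its source
  accepted, erased, or still waiting in \<open>L\<close>. Each step removes the processed edge from \<open>F\<close>, so
  after \<open>card E\<close> steps the queue is empty, and the invariant with \<open>L = []\<close> says precisely that the
  erased vertices are the vertices outside \<open>A\<close> with an edge into \<open>A\<close>.\<close>

fun expl_invariant :: "'a set \<Rightarrow> ('a \<times> 'a) set \<Rightarrow> 'a expl_state \<Rightarrow> bool" where
  "expl_invariant V E (A, F, L, Er) \<longleftrightarrow>
     F = {e \<in> E. fst e \<notin> A \<and> fst e \<notin> Er \<and> snd e \<notin> Er} \<and> set L \<subseteq> F
     \<and> (\<forall>e\<in>set L. snd e \<in> A) \<and> A \<inter> Er = {} \<and> Er \<subseteq> V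
     \<and> (\<forall>u\<in>Er. \<exists>z\<in>A. (u, z) \<in> E)
     \<and> (\<forall>z\<in>A. \<forall>u. (u, z) \<in> E \<longrightarrow> u \<in> A \<or> u \<in> Er \<or> (u, z) \<in> set L)"

declare expl_invariant.simps [simp del]

lemma simple_digraph_finite_edges: "simple_digraph V E \<Longrightarrow> finite E"
  unfolding simple_digraph_def by (meson finite_SigmaI finite_subset)

lemma set_in_edges_sorted:
  assumes "finite F"
  shows "set (in_edges_sorted F w) = {e \<in> F. snd e = w}"
proof -
  have "{u. (u, w) \<in> F} \<subseteq> fst ` F" by force
  then have "finite {u. (u, w) \<in> F}" using assms finite_subset by blast
  then show ?thesis unfolding in_edges_sorted_def by auto
qed

lemma expl_step_Nil: "expl_step a (A, F, [], Er) = (A, F, [], Er)"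
  unfolding expl_step_def by simp

lemma expl_invariant_init:
  assumes "simple_digraph V E"
  shows "expl_invariant V E (expl_init E r)"
  using assms simple_digraph_finite_edges[OF assms]
  by (auto simp: simple_digraph_def expl_init_def set_in_edges_sorted expl_invariant.simps)

lemma expl_step_accept:
  "(w, t) \<in> a \<Longrightarrow> expl_step a (A, F, (w, t) # L, Er) =
     (insert w A, {f \<in> F. fst f \<noteq> w},
      filter (\<lambda>f. fst f \<noteq> w) L @ in_edges_sorted {f \<in> F. fst f \<noteq> w} w, Er)"
  unfolding expl_step_def by (simp add: Let_def)

lemma expl_step_erase:
  "(w, t) \<notin> a \<Longrightarrow> expl_step a (A, F, (w, t) # L, Er) =
     (A, {f \<in> F. fst f \<noteq> w \<and> snd f \<noteq> w},
      filter (\<lambda>f. fst f \<noteq> w \<and> snd f \<noteq> w) L, insert w Er)"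
  unfolding expl_step_def by (simp add: Let_def)

lemma expl_invariant_step:
  assumes "finite E" and "E \<subseteq> V \<times> V" and inv: "expl_invariant V E (A, F, e # L, Er)"
  shows "expl_invariant V E (expl_step a (A, F, e # L, Er))"
proof -
  note inv = inv[unfolded expl_invariant.simps]
  obtain w t where e: "e = (w, t)" by force
  have "finite F" using inv \<open>finite E\<close> finite_subset by auto
  have "(w, t) \<in> E" "t \<in> A" "w \<notin> Er" using inv e by auto
  then have "w \<in> V" using \<open>E \<subseteq> V \<times> V\<close> by auto
  show ?thesis
  proof (cases "e \<in> a")
    case True
    have "set (in_edges_sorted {f \<in> F. fst f \<noteq> w} w) = {f \<in> F. fst f \<noteq> w \<and> snd f = w}"
      using \<open>finite F\<close> by (simp add: set_in_edges_sorted)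
    then show ?thesis
      using inv \<open>w \<in> V\<close> \<open>t \<in> A\<close> \<open>w \<notin> Er\<close> \<open>(w, t) \<in> E\<close>
      unfolding e expl_step_accept[OF True[unfolded e]]
      by (simp (no_asm_simp) only: expl_invariant.simps set_append set_filter) (auto simp: e)
  next
    case False
    then show ?thesis
      using inv \<open>w \<in> V\<close> \<open>t \<in> A\<close> \<open>(w, t) \<in> E\<close>
      unfolding e expl_step_erase[OF False[unfolded e]] by (auto simp: e expl_invariant.simps)
  qed
qed

lemma expl_step_shrinks_F:
  assumes "finite F" and "e \<in> F"
  shows "card (fst (snd (expl_step a (A, F, e # L, Er)))) < card F"
proof -
  have "fst (snd (expl_step a (A, F, e # L, Er))) \<subseteq> F - {e}"
    unfolding expl_step_def by (auto simp: Let_def)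
  then show ?thesis
    using assms by (meson card_Diff1_less card_mono finite_Diff order_le_less_trans)
qed

lemma expl_funpow_invariant:
  assumes "simple_digraph V E" and "(expl_step a ^^ n) (expl_init E r) = (A, F, L, Er)"
  shows "expl_invariant V E (A, F, L, Er) \<and> (L = [] \<or> n + card F \<le> card E)"
  using assms(2)
proof (induction n arbitrary: A F L Er)
  case 0
  have "card {e \<in> E. fst e \<noteq> r} \<le> card E"
    using simple_digraph_finite_edges[OF assms(1)] by (intro card_mono) auto
  then show ?case using 0 expl_invariant_init[OF assms(1), of r] by (simp add: expl_init_def)
next
  case (Suc n)
  obtain A0 F0 L0 Er0 where s: "(expl_step a ^^ n) (expl_init E r) = (A0, F0, L0, Er0)"
    by (metis prod_cases4)
  then have IH: "expl_invariant V E (A0, F0, L0, Er0)" "L0 = [] \<or> n + card F0 \<le> card E"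
    using Suc.IH by auto
  have step: "expl_step a (A0, F0, L0, Er0) = (A, F, L, Er)" using Suc.prems s by simp
  have "finite E" "E \<subseteq> V \<times> V"
    using assms(1) simple_digraph_finite_edges unfolding simple_digraph_def by auto
  show ?case
  proof (cases L0)
    case Nil
    then show ?thesis using IH step by (simp add: expl_step_Nil)
  next
    case (Cons e L')
    have "finite F0" "e \<in> F0"
      using IH(1) Cons \<open>finite E\<close> finite_subset by (auto simp: expl_invariant.simps)
    have "expl_invariant V E (A, F, L, Er)"
      using expl_invariant_step[OF \<open>finite E\<close> \<open>E \<subseteq> V \<times> V\<close>, of A0 F0 e L' Er0 a] IH(1) step Cons
      by simp
    moreover have "card F < card F0"
      using expl_step_shrinks_F[OF \<open>finite F0\<close> \<open>e \<in> F0\<close>, of a A0 L' Er0] step Cons by simp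
    ultimately show ?thesis using IH(2) Cons by simp
  qed
qed

lemma expl_final_terminated:
  assumes "simple_digraph V E" and "expl_final E a r = (A, F, L, Er)"
  shows "expl_invariant V E (A, F, L, Er)" and "L = []"
proof -
  have H: "expl_invariant V E (A, F, L, Er)" "L = [] \<or> card F = 0"
    using expl_funpow_invariant[OF assms(1) assms(2)[unfolded expl_final_def]] by auto
  then show "expl_invariant V E (A, F, L, Er)" by simp
  have "finite F" using H(1) simple_digraph_finite_edges[OF assms(1)] finite_subset
    by (auto simp: expl_invariant.simps)
  then have "L \<noteq> [] \<Longrightarrow> F = {}" using H(2) by auto
  then show "L = []" using H(1) by (cases L) (auto simp: expl_invariant.simps)
qed

lemma expl_invariant_Nil_boundary:
  "expl_invariant V E (A, F, [], Er) \<Longrightarrow> Er = boundary V E A"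
  unfolding boundary_def expl_invariant.simps by auto

theorem lemma4p3:
  fixes V :: "'a::linorder set" and E b :: "('a \<times> 'a) set" and r :: 'a
  assumes "simple_digraph V E"
    and "strongly_connected V E"
    and "spanning_tree V E b r"
  shows "erased E b r = boundary V E (phi E b r)"
proof -
  obtain A F L Er where s: "expl_final E b r = (A, F, L, Er)"
    by (metis prod_cases4)
  with expl_final_terminated[OF assms(1) s] have "Er = boundary V E A"
    by (simp add: expl_invariant_Nil_boundary)
  then show ?thesis using s unfolding erased_def phi_def by simp
qed

end
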